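(* Let $P$ and $Q$ be finite $(3+1)$-free posets with the same skeleton. Suppose $P$ and $Q$ have compatible listings $(X_1,\dots,X_m)$ and $(Y_1,\dots,Y_m)$ that yield the same word $w\in\Sigma^*$, and that for each $i$, if $X_i$ (equivalently $Y_i$) is a clone set then $|X_i|=|Y_i|$, and if $X_i$ is a tangle then $X_i$ and $Y_i$ are isomorphic as induced subposets. Then $P\cong Q$. In other words, a $(3+1)$-free poset is determined up to isomorphism by its skeleton together with, for each letter of the skeleton, the cardinality of the corresponding clone set or the isomorphism class of the corresponding tangle.
   Context: A poset $P$ is $(3+1)$-free if there are no $a,b,c,d\in P$ with $a<b<c$ and $d$ incomparable to each of $a,b,c$. For $a\in P$ let $D_a=\{x\in P:x<a\}$, $U_a=\{x\in P:x>a\}$. Write $a\mathrel{\top}b$ if neither of $D_a,D_b$ contains the other, $a\mathrel{\bot}b$ if neither of $U_a,U_b$ contains the other, and $a\approx b$ if $D_a=D_b$ and $U_a=U_b$. A top of a tangle is a subset $A\subseteq P$ with $|A|\ge2$ that is a connected component of the graph on $P$ with edges $\{a,b\}$ for $a\mathrel{\top}b$; a bottom of a tangle is defined likewise using $\bot$. A top $A$ and bottom $B$ are matched if there are distinct $a_1,a_2\in A$, $b_1,b_2\in B$ with $b_1<a_1$, $b_2<a_2$ and the pairs $\{a_1,a_2\},\{b_1,b_2\},\{b_1,a_2\},\{b_2,a_1\}$ incomparable; in a $(3+1)$-free poset this is a perfect matching. A tangle is a matched pair $(A,B)$, identified with $A\cup B$ and its induced subposet; a clone set is an equivalence class of $\approx$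 on the vertices in no tangle; clone sets and tangles are the parts of $P$. Levels: $L_1$ = minimal elements of $P$, $L_{k+1}$ = minimal elements of $P\setminus(L_1\cup\dots\cup L_k)$, and $\ell(a)=k$ if $a\in L_k$; each clone set lies in a single level and each tangle lies in $L_i\cup L_{i+1}$ for some $i$. A compatible listing is an ordering $(X_1,\dots,X_m)$ of all parts such that for $a\in X_i$, $b\in X_j$, $i\ne j$: $a<b$ iff $\ell(a)\le\ell(b)-2$, or $\ell(a)=\ell(b)-1$ and $i<j$ (compatible listings exist). Let $\Sigma=\{c_1,c_2,\dots\}\cup\{t_{12},t_{23},\dots,t_{i\,i+1},\dots\}$, $\Sigma^*$ the free monoid on $\Sigma$, and $M$ the quotient of $\Sigma^*$ by the commutation relations $c_ic_j=c_jc_i$ if $|i-j|\ge2$; $c_it_{j\,j+1}=t_{j\,j+1}c_i$ if $i\le j-2$ or $i\ge j+3$; $t_{i\,i+1}t_{j\,j+1}=t_{j\,j+1}t_{i\,i+1}$ if $|i-j|\ge3$. The word of a compatible listing replaces each clone set at level $i$ by $c_i$ and each tangle in levels $\{i,i+1\}$ by $t_{i\,i+1}$; the words of all compatible listings of $P$ have the same image in $M$, called the skeleton of $P$. *)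

theory Defs
  imports Main
begin

definition strict_poset :: "'a set \<Rightarrow> ('a \<Rightarrow> 'a \<Rightarrow> bool) \<Rightarrow> bool" where
  "strict_poset S lt \<longleftrightarrow> (\<forall>x\<in>S. \<not> lt x x) \<and>
     (\<forall>x\<in>S. \<forall>y\<in>S. \<forall>z\<in>S. lt x y \<longrightarrow> lt y z \<longrightarrow> lt x z)"

definition incomp :: "('a \<Rightarrow> 'a \<Rightarrow> bool) \<Rightarrow> 'a \<Rightarrow> 'a \<Rightarrow> bool" where
  "incomp lt x y \<longleftrightarrow> \<not> lt x y \<and> \<not> lt y x"

definition free_3_1 :: "'a set \<Rightarrow> ('a \<Rightarrow> 'a \<Rightarrow> bool) \<Rightarrow> bool" where
  "free_3_1 S lt \<longleftrightarrow> \<not> (\<exists>a\<in>S. \<exists>b\<in>S. \<exists>c\<in>S. \<exists>d\<in>S. lt a b \<and> lt b c \<and>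
       incomp lt d a \<and> incomp lt d b \<and> incomp lt d c)"

definition downset :: "'a set \<Rightarrow> ('a \<Rightarrow> 'a \<Rightarrow> bool) \<Rightarrow> 'a \<Rightarrow> 'a set" where
  "downset S lt a = {x\<in>S. lt x a}"

definition upset :: "'a set \<Rightarrow> ('a \<Rightarrow> 'a \<Rightarrow> bool) \<Rightarrow> 'a \<Rightarrow> 'a set" where
  "upset S lt a = {x\<in>S. lt a x}"

definition top_rel :: "'a set \<Rightarrow> ('a \<Rightarrow> 'a \<Rightarrow> bool) \<Rightarrow> 'a \<Rightarrow> 'a \<Rightarrow> bool" where
  "top_rel S lt a b \<longleftrightarrow> a \<in> S \<and> b \<in> S \<and>
     \<not> downset S lt a \<subseteq> downset S lt b \<and> \<not> downset S lt b \<subseteq> downset S lt a"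

definition bot_rel :: "'a set \<Rightarrow> ('a \<Rightarrow> 'a \<Rightarrow> bool) \<Rightarrow> 'a \<Rightarrow> 'a \<Rightarrow> bool" where
  "bot_rel S lt a b \<longleftrightarrow> a \<in> S \<and> b \<in> S \<and>
     \<not> upset S lt a \<subseteq> upset S lt b \<and> \<not> upset S lt b \<subseteq> upset S lt a"

definition clone_eq :: "'a set \<Rightarrow> ('a \<Rightarrow> 'a \<Rightarrow> bool) \<Rightarrow> 'a \<Rightarrow> 'a \<Rightarrow> bool" where
  "clone_eq S lt a b \<longleftrightarrow> downset S lt a = downset S lt b \<and> upset S lt a = upset S lt b"

definition component :: "'a set \<Rightarrow> ('a \<Rightarrow> 'a \<Rightarrow> bool) \<Rightarrow> 'a \<Rightarrow> 'a set" where
  "component S R a = {b\<in>S. R\<^sup>*\<^sup>* a b}"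

definition is_top :: "'a set \<Rightarrow> ('a \<Rightarrow> 'a \<Rightarrow> bool) \<Rightarrow> 'a set \<Rightarrow> bool" where
  "is_top S lt A \<longleftrightarrow> 2 \<le> card A \<and> (\<exists>a\<in>S. A = component S (top_rel S lt) a)"

definition is_bottom :: "'a set \<Rightarrow> ('a \<Rightarrow> 'a \<Rightarrow> bool) \<Rightarrow> 'a set \<Rightarrow> bool" where
  "is_bottom S lt B \<longleftrightarrow> 2 \<le> card B \<and> (\<exists>b\<in>S. B = component S (bot_rel S lt) b)"

definition matched :: "('a \<Rightarrow> 'a \<Rightarrow> bool) \<Rightarrow> 'a set \<Rightarrow> 'a set \<Rightarrow> bool" where
  "matched lt A B \<longleftrightarrow> (\<exists>a1\<in>A. \<exists>a2\<in>A. \<exists>b1\<in>B. \<exists>b2\<in>B. a1 \<noteq> a2 \<and> b1 \<noteq> b2 \<and>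
      lt b1 a1 \<and> lt b2 a2 \<and> incomp lt a1 a2 \<and> incomp lt b1 b2 \<and>
      incomp lt b1 a2 \<and> incomp lt b2 a1)"

definition tangle :: "'a set \<Rightarrow> ('a \<Rightarrow> 'a \<Rightarrow> bool) \<Rightarrow> 'a set \<Rightarrow> 'a set \<Rightarrow> bool" where
  "tangle S lt A B \<longleftrightarrow> is_top S lt A \<and> is_bottom S lt B \<and> matched lt A B"

definition is_tangle :: "'a set \<Rightarrow> ('a \<Rightarrow> 'a \<Rightarrow> bool) \<Rightarrow> 'a set \<Rightarrow> bool" where
  "is_tangle S lt X \<longleftrightarrow> (\<exists>A B. tangle S lt A B \<and> X = A \<union> B)"

definition in_tangle :: "'a set \<Rightarrow> ('a \<Rightarrow> 'a \<Rightarrow> bool) \<Rightarrow> 'a \<Rightarrow> bool" where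
  "in_tangle S lt x \<longleftrightarrow> (\<exists>X. is_tangle S lt X \<and> x \<in> X)"

definition is_clone_set :: "'a set \<Rightarrow> ('a \<Rightarrow> 'a \<Rightarrow> bool) \<Rightarrow> 'a set \<Rightarrow> bool" where
  "is_clone_set S lt X \<longleftrightarrow> (\<exists>x\<in>S. \<not> in_tangle S lt x \<and>
      X = {y\<in>S. \<not> in_tangle S lt y \<and> clone_eq S lt x y})"

definition parts :: "'a set \<Rightarrow> ('a \<Rightarrow> 'a \<Rightarrow> bool) \<Rightarrow> 'a set set" where
  "parts S lt = {X. is_clone_set S lt X} \<union> {X. is_tangle S lt X}"

text \<open>Levels: below_levels k = L_1 \<union> ... \<union> L_k, where L_{k+1} is the set of minimal
  elements of S minus (L_1 \<union> ... \<union> L_k).\<close>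
definition minimals :: "('a \<Rightarrow> 'a \<Rightarrow> bool) \<Rightarrow> 'a set \<Rightarrow> 'a set" where
  "minimals lt T = {x\<in>T. \<not> (\<exists>y\<in>T. lt y x)}"

fun below_levels :: "'a set \<Rightarrow> ('a \<Rightarrow> 'a \<Rightarrow> bool) \<Rightarrow> nat \<Rightarrow> 'a set" where
  "below_levels S lt 0 = {}"
| "below_levels S lt (Suc k) = below_levels S lt k \<union> minimals lt (S - below_levels S lt k)"

definition level_set :: "'a set \<Rightarrow> ('a \<Rightarrow> 'a \<Rightarrow> bool) \<Rightarrow> nat \<Rightarrow> 'a set" where
  "level_set S lt k = minimals lt (S - below_levels S lt (k - 1))"

definition level :: "'a set \<Rightarrow> ('a \<Rightarrow> 'a \<Rightarrow> bool) \<Rightarrow> 'a \<Rightarrow> nat" where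
  "level S lt a = (LEAST k. 1 \<le> k \<and> a \<in> level_set S lt k)"

definition compatible_listing :: "'a set \<Rightarrow> ('a \<Rightarrow> 'a \<Rightarrow> bool) \<Rightarrow> 'a set list \<Rightarrow> bool" where
  "compatible_listing S lt Xs \<longleftrightarrow> distinct Xs \<and> set Xs = parts S lt \<and>
     (\<forall>i<length Xs. \<forall>j<length Xs. i \<noteq> j \<longrightarrow> (\<forall>a\<in>Xs!i. \<forall>b\<in>Xs!j.
        lt a b \<longleftrightarrow> (level S lt a + 2 \<le> level S lt b \<or>
                     (level S lt a + 1 = level S lt b \<and> i < j))))"

text \<open>Alphabet: C i stands for c_i, T i stands for t_{i,i+1}.\<close>
datatype letter = C nat | T nat

definition letter_of :: "'a set \<Rightarrow> ('a \<Rightarrow> 'a \<Rightarrow> bool) \<Rightarrow> 'a set \<Rightarrow> letter" where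
  "letter_of S lt X = (if is_tangle S lt X then T (Min (level S lt ` X))
                       else C (Min (level S lt ` X)))"

definition word :: "'a set \<Rightarrow> ('a \<Rightarrow> 'a \<Rightarrow> bool) \<Rightarrow> 'a set list \<Rightarrow> letter list" where
  "word S lt Xs = map (letter_of S lt) Xs"

fun commute :: "letter \<Rightarrow> letter \<Rightarrow> bool" where
  "commute (C i) (C j) \<longleftrightarrow> 2 \<le> max i j - min i j"
| "commute (C i) (T j) \<longleftrightarrow> i + 2 \<le> j \<or> j + 3 \<le> i"
| "commute (T j) (C i) \<longleftrightarrow> i + 2 \<le> j \<or> j + 3 \<le> i"
| "commute (T i) (T j) \<longleftrightarrow> 3 \<le> max i j - min i j"

definition swap_step :: "letter list \<Rightarrow> letter list \<Rightarrow> bool" where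
  "swap_step u v \<longleftrightarrow> (\<exists>p q x y. commute x y \<and> u = p @ [x, y] @ q \<and> v = p @ [y, x] @ q)"

text \<open>Equality in the partially commutative monoid M.\<close>
definition trace_eq :: "letter list \<Rightarrow> letter list \<Rightarrow> bool" where
  "trace_eq u v \<longleftrightarrow> swap_step\<^sup>*\<^sup>* u v"

text \<open>The skeleton: the element of M (as a class of words) given by compatible listings.\<close>
definition skeleton :: "'a set \<Rightarrow> ('a \<Rightarrow> 'a \<Rightarrow> bool) \<Rightarrow> letter list set" where
  "skeleton S lt = {w. \<exists>Xs. compatible_listing S lt Xs \<and> trace_eq (word S lt Xs) w}"

definition order_iso :: "'a set \<Rightarrow> ('a \<Rightarrow> 'a \<Rightarrow> bool) \<Rightarrow> 'b set \<Rightarrow> ('b \<Rightarrow> 'b \<Rightarrow> bool) \<Rightarrow> bool" where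
  "order_iso X lt Y lt' \<longleftrightarrow> (\<exists>f. bij_betw f X Y \<and> (\<forall>x\<in>X. \<forall>y\<in>X. lt x y \<longleftrightarrow> lt' (f x) (f y)))"

end

(*
  In a (3+1)-free poset every element lying at least two levels below another one is below it.
  Consequently two elements related by top (or bottom) lie on the same level, the top of a tangle
  lies exactly one level above its bottom, and no element is in both a top and a bottom; with the
  compatible listing this makes the parts pairwise disjoint.

  Matching parts then admit level-preserving isomorphisms: any bijection between two clone sets
  of the same size and level (both are antichains), and the given isomorphism of tangles, since
  inside a tangle the level of an element is determined by whether something in the tangle lies
  below it. Gluing these along the listings gives a bijection, and it is an order isomorphism
  because between different parts of a compatible listing the order is determined by levels and
  positions alone. Equality of the words is all that is used of the skeletons.
*)

theory Submission
  imports Defs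
begin

lemma component_eq_if_mem:
  assumes "symp R" "z \<in> component S R a"
  shows "component S R a = component S R z"
proof -
  have az: "R\<^sup>*\<^sup>* a z" using assms(2) by (simp add: component_def)
  then have "R\<^sup>*\<^sup>* z a" using symp_rtranclp[OF assms(1)] by (blast dest: sympD)
  then show ?thesis using az unfolding component_def by (meson rtranclp_trans)
qed

lemma component_has_neighbour:
  assumes "symp R" "z \<in> component S R a" "2 \<le> card (component S R a)"
  obtains u where "R z u"
proof -
  have "\<not> component S R a \<subseteq> {z}"
  proof
    assume "component S R a \<subseteq> {z}"
    then have "card (component S R a) \<le> 1" using card_mono[of "{z}"] by simp
    then show False using assms(3) by simp
  qed
  then obtain w where "w \<in> component S R z" "w \<noteq> z" using component_eq_if_mem[OF assms(1,2)] by blast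
  then show ?thesis using that by (auto simp: component_def elim: converse_rtranclpE)
qed

lemma component_invariant:
  assumes "\<And>x y. R x y \<Longrightarrow> f x = f y" "z \<in> component S R a"
  shows "f z = f a"
proof -
  have "R\<^sup>*\<^sup>* a z" using assms(2) by (simp add: component_def)
  then show ?thesis by (induction rule: rtranclp_induct) (auto dest: assms(1))
qed

lemma symp_top_rel: "symp (top_rel S lt)"
  by (auto simp: symp_def top_rel_def)

lemma symp_bot_rel: "symp (bot_rel S lt)"
  by (auto simp: symp_def bot_rel_def)

section \<open>Levels of a (3+1)-free poset\<close>

locale free31_poset =
  fixes S :: "'a set" and lt :: "'a \<Rightarrow> 'a \<Rightarrow> bool"
  assumes finite_carrier: "finite S"
    and strict: "strict_poset S lt"
    and free: "free_3_1 S lt"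
begin

abbreviation "lv \<equiv> level S lt"
abbreviation "BL \<equiv> below_levels S lt"

lemma irrefl: "x \<in> S \<Longrightarrow> \<not> lt x x"
  using strict unfolding strict_poset_def by blast

lemma lt_trans: "x \<in> S \<Longrightarrow> y \<in> S \<Longrightarrow> z \<in> S \<Longrightarrow> lt x y \<Longrightarrow> lt y z \<Longrightarrow> lt x z"
  using strict unfolding strict_poset_def by blast

lemma no_3_plus_1:
  assumes "a \<in> S" "b \<in> S" "c \<in> S" "d \<in> S" "lt a b" "lt b c"
    and "\<not> lt d a" "\<not> lt a d" "\<not> lt d b" "\<not> lt b d" "\<not> lt d c" "\<not> lt c d"
  shows False
  using free assms unfolding free_3_1_def incomp_def by blast

lemma below_levels_subset: "BL k \<subseteq> S"
  by (induction k) (auto simp: minimals_def)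

lemma below_levels_down_closed: "a \<in> BL k \<Longrightarrow> b \<in> S \<Longrightarrow> lt b a \<Longrightarrow> b \<in> BL k"
  by (induction k arbitrary: a) (auto simp: minimals_def)

lemma below_levels_Suc_eq: "BL (Suc k) = {a\<in>S. downset S lt a \<subseteq> BL k}"
  using below_levels_subset[of k] below_levels_down_closed[of _ k]
  by (auto simp: minimals_def downset_def)

lemma below_levels_mono: "k \<le> m \<Longrightarrow> BL k \<subseteq> BL m"
  by (induction m) (auto simp: le_Suc_eq)

lemma downset_psubset: "a \<in> S \<Longrightarrow> b \<in> S \<Longrightarrow> lt b a \<Longrightarrow> downset S lt b \<subset> downset S lt a"
  using irrefl lt_trans[of _ b a] unfolding downset_def by auto

lemma mem_below_levels_card_downset: "a \<in> S \<Longrightarrow> a \<in> BL (Suc (card (downset S lt a)))"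
proof (induction "card (downset S lt a)" arbitrary: a rule: less_induct)
  case less
  have "downset S lt a \<subseteq> BL (card (downset S lt a))"
  proof
    fix b assume "b \<in> downset S lt a"
    then have b: "b \<in> S" "lt b a" by (auto simp: downset_def)
    have "card (downset S lt b) < card (downset S lt a)"
      using downset_psubset[OF less.prems b] finite_carrier by (intro psubset_card_mono) (auto simp: downset_def)
    then show "b \<in> BL (card (downset S lt a))"
      using less.hyps[OF _ b(1)] below_levels_mono[of "Suc (card (downset S lt b))" "card (downset S lt a)"]
      by (auto simp del: below_levels.simps)
  qed
  then show ?case using less.prems below_levels_Suc_eq by blast
qed

lemma level_set_iff: "a \<in> level_set S lt (Suc k) \<longleftrightarrow> a \<in> BL (Suc k) \<and> a \<notin> BL k"
  unfolding level_set_def by (auto simp: minimals_def)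

lemma level_eq_Least: assumes "a \<in> S" shows "lv a = (LEAST k. a \<in> BL k)"
proof -
  let ?m = "LEAST k. a \<in> BL k"
  have am: "a \<in> BL ?m" using mem_below_levels_card_downset[OF assms] by (rule LeastI)
  then obtain j where j: "?m = Suc j" by (cases ?m) auto
  have "a \<notin> BL j" using not_less_Least[of j "\<lambda>k. a \<in> BL k"] j by auto
  show ?thesis unfolding level_def
  proof (rule Least_equality)
    show "1 \<le> ?m \<and> a \<in> level_set S lt ?m" using j am \<open>a \<notin> BL j\<close> level_set_iff by simp
  next
    fix k assume "1 \<le> k \<and> a \<in> level_set S lt k"
    then show "?m \<le> k" using level_set_iff[of a "k - 1"] by (auto intro: Least_le)
  qed
qed

lemma level_le_iff: assumes "a \<in> S" shows "lv a \<le> k \<longleftrightarrow> a \<in> BL k"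
proof
  assume "lv a \<le> k"
  moreover have "a \<in> BL (lv a)"
    unfolding level_eq_Least[OF assms] using mem_below_levels_card_downset[OF assms] by (rule LeastI)
  ultimately show "a \<in> BL k" using below_levels_mono by blast
qed (simp add: level_eq_Least[OF assms] Least_le)

lemma level_pos: "a \<in> S \<Longrightarrow> 1 \<le> lv a"
  using level_le_iff[of a 0] by simp

lemma level_less: assumes "a \<in> S" "b \<in> S" "lt b a" shows "lv b < lv a"
proof -
  obtain j where j: "lv a = Suc j" using level_pos[OF assms(1)] by (cases "lv a") auto
  then have "a \<in> BL (Suc j)" using level_le_iff[OF assms(1), of "Suc j"] by (simp del: below_levels.simps)
  then have "b \<in> BL j" using assms below_levels_Suc_eq by (auto simp: downset_def)
  then show ?thesis using level_le_iff[OF assms(2), of j] j by (simp del: below_levels.simps)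
qed

lemma level_pred:
  assumes "a \<in> S" "2 \<le> lv a"
  obtains c where "c \<in> S" "lt c a" "lv c = lv a - 1"
proof -
  obtain j where j: "lv a = Suc (Suc j)" using assms(2) by (cases "lv a"; cases "lv a - 1") auto
  then have "a \<notin> BL (Suc j)" using level_le_iff[OF assms(1), of "Suc j"] by (simp del: below_levels.simps)
  then obtain c where c: "c \<in> S" "lt c a" "c \<notin> BL j"
    using assms(1) below_levels_Suc_eq by (auto simp: downset_def)
  have "j < lv c" using level_le_iff[OF c(1), of j] c(3) by (simp del: below_levels.simps)
  moreover have "lv c < lv a" using level_less assms(1) c by blast
  ultimately show ?thesis using that c j by simp
qed

lemma level_eq_if_downset_eq:
  assumes "a \<in> S" "b \<in> S" "downset S lt a = downset S lt b"
  shows "lv a = lv b"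
proof -
  have "a \<in> BL k \<longleftrightarrow> b \<in> BL k" for k
    using assms by (cases k) (simp_all only: below_levels_Suc_eq mem_Collect_eq below_levels.simps(1) empty_iff)
  then show ?thesis using level_le_iff[OF assms(1)] level_le_iff[OF assms(2)] by (meson le_antisym order_refl)
qed

lemma not_less_if_level_eq: "x \<in> S \<Longrightarrow> y \<in> S \<Longrightarrow> lv x = lv y \<Longrightarrow> \<not> lt x y"
  using level_less by fastforce

lemma less_if_level_gap:
  assumes d: "d \<in> S" and a: "a \<in> S" and gap: "lv d + 2 \<le> lv a"
  shows "lt d a"
proof (rule ccontr)
  assume nda: "\<not> lt d a"
  have "2 \<le> lv a" using gap by simp
  then obtain e1 where e1: "e1 \<in> S" "lt e1 a" "lv e1 = lv a - 1" using level_pred a by blast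
  have "2 \<le> lv e1" using e1(3) gap level_pos[OF d] by simp
  then obtain e2 where e2: "e2 \<in> S" "lt e2 e1" "lv e2 = lv e1 - 1" using level_pred e1(1) by blast
  have "\<not> lt d e1" "\<not> lt d e2" using nda lt_trans d a e1 e2 by blast+
  moreover have "\<not> lt a d" "\<not> lt e1 d" "\<not> lt e2 d"
    using level_less[OF d] a e1 e2 gap by fastforce+
  ultimately show False using no_3_plus_1[OF e2(1) e1(1) a d e2(2) e1(2)] nda by blast
qed

lemma level_le_if_downset_not_subset:
  assumes "a \<in> S" "b \<in> S" "\<not> downset S lt a \<subseteq> downset S lt b"
  shows "lv b \<le> lv a"
proof -
  obtain x where x: "x \<in> S" "lt x a" "\<not> lt x b" using assms(3) by (auto simp: downset_def)
  then have "lv x < lv a" using level_less assms(1) by blast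
  then show ?thesis using less_if_level_gap[OF x(1) assms(2)] x(3) by linarith
qed

lemma level_le_if_upset_not_subset:
  assumes "a \<in> S" "b \<in> S" "\<not> upset S lt a \<subseteq> upset S lt b"
  shows "lv a \<le> lv b"
proof -
  obtain x where x: "x \<in> S" "lt a x" "\<not> lt b x" using assms(3) by (auto simp: upset_def)
  then have "lv a < lv x" using level_less assms(1) by blast
  then show ?thesis using less_if_level_gap[OF assms(2) x(1)] x(3) by linarith
qed

lemma top_rel_level_eq: "top_rel S lt a b \<Longrightarrow> lv a = lv b"
  unfolding top_rel_def using level_le_if_downset_not_subset by (meson le_antisym)

lemma bot_rel_level_eq: "bot_rel S lt a b \<Longrightarrow> lv a = lv b"
  unfolding bot_rel_def using level_le_if_upset_not_subset by (meson le_antisym)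

lemma not_top_rel_and_bot_rel:
  assumes t: "top_rel S lt z u" and b: "bot_rel S lt z v"
  shows False
proof -
  have S: "z \<in> S" "u \<in> S" "v \<in> S" using t b by (auto simp: top_rel_def bot_rel_def)
  have l: "lv z = lv u" "lv z = lv v" using top_rel_level_eq[OF t] bot_rel_level_eq[OF b] by auto
  obtain p where p: "p \<in> S" "lt p z" "\<not> lt p u" using t by (auto simp: top_rel_def downset_def)
  obtain q where q: "q \<in> S" "lt q u" "\<not> lt q z" using t by (auto simp: top_rel_def downset_def)
  obtain r where r: "r \<in> S" "lt z r" "\<not> lt v r" using b by (auto simp: bot_rel_def upset_def)
  obtain s where s: "s \<in> S" "lt v s" "\<not> lt z s" using b by (auto simp: bot_rel_def upset_def)
  have incomp: "\<not> lt z u" "\<not> lt u z" "\<not> lt z v" "\<not> lt v z" "\<not> lt u v" "\<not> lt v u"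
    using not_less_if_level_eq S l by auto
  have "lv z < lv r" "lv v < lv s" using level_less S r s by blast+
  then have above: "\<not> lt r u" "\<not> lt r v" "\<not> lt s z" using level_less S r s l by fastforce+
  have "\<not> lt u p" using lt_trans S p incomp by metis
  then have ur: "lt u r" using no_3_plus_1[OF p(1) S(1) r(1) S(2) p(2) r(2)] p(3) incomp above by blast
  have "\<not> lt v q" using lt_trans S q incomp by metis
  then have qv: "lt q v" using no_3_plus_1[OF q(1) S(2) r(1) S(3) q(2) ur] r(3) incomp above by blast
  have "\<not> lt z q" using lt_trans S q incomp by metis
  then show False using no_3_plus_1[OF q(1) S(3) s(1) S(1) qv s(2)] q(3) s(3) incomp above by blast
qed

section \<open>Tops, bottoms and tangles\<close>

lemma tangle_subset: "tangle S lt A B \<Longrightarrow> A \<union> B \<subseteq> S"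
  by (auto simp: tangle_def is_top_def is_bottom_def component_def)

lemma tangle_top_component: "tangle S lt A B \<Longrightarrow> z \<in> A \<Longrightarrow> A = component S (top_rel S lt) z"
  unfolding tangle_def is_top_def using component_eq_if_mem[OF symp_top_rel] by metis

lemma tangle_bottom_component: "tangle S lt A B \<Longrightarrow> z \<in> B \<Longrightarrow> B = component S (bot_rel S lt) z"
  unfolding tangle_def is_bottom_def using component_eq_if_mem[OF symp_bot_rel] by metis

lemma tangle_top_has_top_rel: "tangle S lt A B \<Longrightarrow> z \<in> A \<Longrightarrow> \<exists>u. top_rel S lt z u"
  unfolding tangle_def is_top_def using component_has_neighbour[OF symp_top_rel] by metis

lemma tangle_bottom_has_bot_rel: "tangle S lt A B \<Longrightarrow> z \<in> B \<Longrightarrow> \<exists>v. bot_rel S lt z v"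
  unfolding tangle_def is_bottom_def using component_has_neighbour[OF symp_bot_rel] by metis

lemma tangle_top_above_bottom:
  assumes t: "tangle S lt A B" and a: "a \<in> A"
  shows "\<exists>b\<in>B. lt b a"
proof -
  obtain a1 b1 where a1: "a1 \<in> A" "b1 \<in> B" "lt b1 a1" using t by (auto simp: tangle_def matched_def)
  have "(top_rel S lt)\<^sup>*\<^sup>* a1 a" using tangle_top_component[OF t a1(1)] a by (simp add: component_def)
  then show ?thesis
  proof (induction rule: rtranclp_induct)
    case base
    then show ?case using a1 by blast
  next
    case (step y z)
    obtain b where b: "b \<in> B" "lt b y" using step.IH by blast
    show ?case
    proof (cases "lt b z")
      case False
      \<comment> \<open>an element below z but not below y is then bot-related to b, hence also in B\<close>
      obtain x where x: "x \<in> S" "lt x z" "\<not> lt x y" using step.hyps(2) by (auto simp: top_rel_def downset_def)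
      have "b \<in> S" "y \<in> S" "z \<in> S" using b tangle_subset[OF t] step.hyps(2) by (auto simp: top_rel_def)
      then have "bot_rel S lt b x" using x b False by (auto simp: bot_rel_def upset_def)
      then have "x \<in> B" using tangle_bottom_component[OF t b(1)] x(1) by (auto simp: component_def)
      then show ?thesis using x by blast
    qed (use b in blast)
  qed
qed

lemma tangle_levels:
  assumes t: "tangle S lt A B"
  obtains \<beta> where "\<forall>b\<in>B. lv b = \<beta>" "\<forall>a\<in>A. lv a = Suc \<beta>"
proof -
  obtain a1 b1 b2 where m: "a1 \<in> A" "b1 \<in> B" "b2 \<in> B" "lt b1 a1" "incomp lt b2 a1"
    using t unfolding tangle_def matched_def by blast
  have S: "a1 \<in> S" "b1 \<in> S" "b2 \<in> S" using m tangle_subset[OF t] by auto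
  have lvA: "\<forall>a\<in>A. lv a = lv a1"
    using component_invariant[of "top_rel S lt" lv, OF top_rel_level_eq] tangle_top_component[OF t m(1)]
    by simp
  have lvB: "\<forall>b\<in>B. lv b = lv b1"
    using component_invariant[of "bot_rel S lt" lv, OF bot_rel_level_eq] tangle_bottom_component[OF t m(2)]
    by simp
  have "lv b1 < lv a1" using level_less S m(4) by blast
  moreover have "\<not> lv b2 + 2 \<le> lv a1" using less_if_level_gap[OF S(3,1)] m(5) by (auto simp: incomp_def)
  moreover have "lv b2 = lv b1" using lvB m(3) by blast
  ultimately have "lv a1 = Suc (lv b1)" by linarith
  with lvA lvB show ?thesis by (intro that) auto
qed

lemma tangle_part_subset: "is_tangle S lt X \<Longrightarrow> X \<subseteq> S"
  using tangle_subset by (auto simp: is_tangle_def)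

lemma tangle_part_level:
  assumes X: "is_tangle S lt X" and a: "a \<in> X"
  shows "lv a = (if \<exists>y\<in>X. lt y a then Suc (Min (lv ` X)) else Min (lv ` X))"
proof -
  obtain A B where t: "tangle S lt A B" and XAB: "X = A \<union> B" using X by (auto simp: is_tangle_def)
  obtain \<beta> where lvB: "\<forall>b\<in>B. lv b = \<beta>" and lvA: "\<forall>a\<in>A. lv a = Suc \<beta>" using tangle_levels[OF t] .
  have XS: "X \<subseteq> S" using tangle_subset[OF t] XAB by simp
  have "B \<noteq> {}" using t by (auto simp: tangle_def matched_def)
  then have "Min (lv ` X) = \<beta>"
    using lvA lvB XAB XS finite_subset[OF XS finite_carrier] by (intro Min_eqI) auto
  moreover have "(\<exists>y\<in>X. lt y a) \<longleftrightarrow> a \<in> A"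
  proof
    assume "\<exists>y\<in>X. lt y a"
    then obtain y where "y \<in> X" "lt y a" by blast
    then have "lv y < lv a" using level_less XS a by blast
    then show "a \<in> A" using lvA lvB XAB \<open>y \<in> X\<close> a by fastforce
  next
    assume "a \<in> A"
    then show "\<exists>y\<in>X. lt y a" using tangle_top_above_bottom[OF t] XAB by blast
  qed
  ultimately show ?thesis using lvA lvB XAB a by auto
qed

section \<open>Parts and compatible listings\<close>

lemma clone_set_eq:
  assumes "is_clone_set S lt X" "z \<in> X"
  shows "X = {y\<in>S. \<not> in_tangle S lt y \<and> clone_eq S lt z y}"
  using assms unfolding is_clone_set_def clone_eq_def by auto

lemma clone_set_subset: "is_clone_set S lt X \<Longrightarrow> X \<subseteq> S"
  by (auto simp: is_clone_set_def)

lemma clone_set_not_in_tangle: "is_clone_set S lt X \<Longrightarrow> z \<in> X \<Longrightarrow> \<not> in_tangle S lt z"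
  by (auto simp: is_clone_set_def)

lemma clone_set_antichain:
  assumes X: "is_clone_set S lt X" and "a \<in> X" "b \<in> X"
  shows "\<not> lt a b"
proof
  assume "lt a b"
  moreover have "downset S lt a = downset S lt b" using clone_set_eq[OF X \<open>a \<in> X\<close>] \<open>b \<in> X\<close>
    by (auto simp: clone_eq_def)
  ultimately show False using irrefl clone_set_subset[OF X] \<open>a \<in> X\<close> by (auto simp: downset_def)
qed

lemma clone_set_level:
  assumes X: "is_clone_set S lt X" and a: "a \<in> X"
  shows "lv a = Min (lv ` X)"
proof -
  have "lv b = lv a" if b: "b \<in> X" for b
  proof -
    have "clone_eq S lt a b" using clone_set_eq[OF X a] b by blast
    then show ?thesis
      using level_eq_if_downset_eq clone_set_subset[OF X] a b unfolding clone_eq_def by blast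
  qed
  then have "lv ` X = {lv a}" using a by blast
  then show ?thesis by simp
qed

lemma parts_subset: "X \<in> parts S lt \<Longrightarrow> X \<subseteq> S"
  using clone_set_subset tangle_part_subset by (auto simp: parts_def)

lemma parts_cover:
  assumes "a \<in> S"
  obtains X where "X \<in> parts S lt" "a \<in> X"
proof (cases "in_tangle S lt a")
  case True
  then show ?thesis using that by (auto simp: in_tangle_def parts_def)
next
  case False
  let ?X = "{y\<in>S. \<not> in_tangle S lt y \<and> clone_eq S lt a y}"
  have "is_clone_set S lt ?X" using assms False by (auto simp: is_clone_set_def)
  moreover have "a \<in> ?X" using assms False by (simp add: clone_eq_def)
  ultimately show ?thesis using that by (auto simp: parts_def)
qed

lemma tangle_top_covers_bottom:
  assumes t: "tangle S lt A B" and a: "a \<in> A"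
  obtains b where "b \<in> B" "lt b a" "lv b + 1 = lv a"
  using tangle_top_above_bottom[OF t a] tangle_levels[OF t] a by (metis Suc_eq_plus1)

lemma clone_set_eq_part_if_mem:
  assumes X: "is_clone_set S lt X" and Y: "Y \<in> parts S lt" and z: "z \<in> X" "z \<in> Y"
  shows "X = Y"
proof (cases "is_clone_set S lt Y")
  case True
  then show ?thesis using clone_set_eq[OF X z(1)] clone_set_eq[of Y z] z(2) by simp
next
  case False
  then have "in_tangle S lt z" using Y z(2) by (auto simp: parts_def in_tangle_def)
  then show ?thesis using clone_set_not_in_tangle[OF X z(1)] by blast
qed

lemma compatible_listing_nth_part:
  "compatible_listing S lt Xs \<Longrightarrow> i < length Xs \<Longrightarrow> Xs!i \<in> parts S lt"
  unfolding compatible_listing_def by (metis nth_mem)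

lemma compatible_listing_less_iff:
  assumes "compatible_listing S lt Xs" "i < length Xs" "j < length Xs" "i \<noteq> j"
    and "a \<in> Xs!i" "b \<in> Xs!j"
  shows "lt a b \<longleftrightarrow> lv a + 2 \<le> lv b \<or> (lv a + 1 = lv b \<and> i < j)"
  using assms unfolding compatible_listing_def by blast

lemma compatible_listing_cover_index:
  assumes "compatible_listing S lt Xs" "i < length Xs" "j < length Xs" "i \<noteq> j"
    and "a \<in> Xs!i" "b \<in> Xs!j" "lt b a" "lv b + 1 = lv a"
  shows "j < i"
  using compatible_listing_less_iff[OF assms(1,3,2) _ assms(6,5)] assms(4,7,8) by auto

lemma compatible_listing_tangles_disjoint:
  assumes cl: "compatible_listing S lt Xs" and ij: "i < length Xs" "j < length Xs" "i \<noteq> j"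
    and ti: "is_tangle S lt (Xs!i)" and tj: "is_tangle S lt (Xs!j)"
  shows "Xs!i \<inter> Xs!j = {}"
proof (rule ccontr)
  assume "Xs!i \<inter> Xs!j \<noteq> {}"
  then obtain z where z: "z \<in> Xs!i" "z \<in> Xs!j" by blast
  obtain A B where t: "tangle S lt A B" and XAB: "Xs!i = A \<union> B" using ti by (auto simp: is_tangle_def)
  obtain A' B' where t': "tangle S lt A' B'" and XAB': "Xs!j = A' \<union> B'" using tj by (auto simp: is_tangle_def)
  have "z \<notin> A \<inter> B'" "z \<notin> B \<inter> A'"
    using not_top_rel_and_bot_rel tangle_top_has_top_rel tangle_bottom_has_bot_rel t t' by blast+
  then consider "z \<in> A" "z \<in> A'" | "z \<in> B" "z \<in> B'" using z XAB XAB' by blast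
  then have "j < i \<and> i < j"
  proof cases
    case 1
    obtain b where "b \<in> B" "lt b z" "lv b + 1 = lv z" using tangle_top_covers_bottom[OF t 1(1)] .
    moreover obtain b' where "b' \<in> B'" "lt b' z" "lv b' + 1 = lv z" using tangle_top_covers_bottom[OF t' 1(2)] .
    ultimately show ?thesis
      using compatible_listing_cover_index[OF cl ij] compatible_listing_cover_index[OF cl ij(2,1)] ij(3)
        z XAB XAB' by (metis UnI2)
  next
    case 2
    then have BB: "B = B'" using tangle_bottom_component[OF t] tangle_bottom_component[OF t'] by metis
    obtain a where "a \<in> A" using t by (auto simp: tangle_def matched_def)
    then obtain b where "a \<in> Xs!i" "b \<in> Xs!j" "lt b a" "lv b + 1 = lv a"
      using tangle_top_covers_bottom[OF t] XAB XAB' BB by (metis UnI1 UnI2)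
    moreover obtain a' where "a' \<in> A'" using t' by (auto simp: tangle_def matched_def)
    then obtain b' where "a' \<in> Xs!j" "b' \<in> Xs!i" "lt b' a'" "lv b' + 1 = lv a'"
      using tangle_top_covers_bottom[OF t'] XAB XAB' BB by (metis UnI1 UnI2)
    ultimately show ?thesis
      using compatible_listing_cover_index[OF cl ij] compatible_listing_cover_index[OF cl ij(2,1)] ij(3)
      by blast
  qed
  then show False by linarith
qed

lemma compatible_listing_disjoint:
  assumes cl: "compatible_listing S lt Xs" and ij: "i < length Xs" "j < length Xs" "i \<noteq> j"
  shows "Xs!i \<inter> Xs!j = {}"
proof (rule ccontr)
  assume "Xs!i \<inter> Xs!j \<noteq> {}"
  then obtain z where z: "z \<in> Xs!i" "z \<in> Xs!j" by blast
  have parts: "Xs!i \<in> parts S lt" "Xs!j \<in> parts S lt" using cl ij by (auto simp: compatible_listing_def)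
  have "Xs!i \<noteq> Xs!j" using cl ij by (simp add: compatible_listing_def nth_eq_iff_index_eq)
  then have "\<not> is_clone_set S lt (Xs!i)" "\<not> is_clone_set S lt (Xs!j)"
    using clone_set_eq_part_if_mem parts z by metis+
  then show False
    using compatible_listing_tangles_disjoint[OF cl ij] parts z by (auto simp: parts_def)
qed

lemma compatible_listing_unique_index:
  assumes cl: "compatible_listing S lt Xs" and a: "a \<in> S"
  shows "\<exists>!i. i < length Xs \<and> a \<in> Xs!i"
proof -
  obtain X where "X \<in> parts S lt" "a \<in> X" using parts_cover a .
  then obtain i where "i < length Xs" "a \<in> Xs!i"
    using cl unfolding compatible_listing_def by (metis in_set_conv_nth)
  then show ?thesis using compatible_listing_disjoint[OF cl] by blast
qed

end

section \<open>Gluing isomorphisms of parts\<close>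

lemma bij_betw_glue:
  assumes A: "\<forall>a\<in>A. \<exists>!i. i < n \<and> a \<in> X i" and B: "\<forall>b\<in>B. \<exists>!i. i < n \<and> b \<in> Y i"
    and XA: "\<forall>i<n. X i \<subseteq> A" and YB: "\<forall>i<n. Y i \<subseteq> B" and g: "\<forall>i<n. bij_betw (g i) (X i) (Y i)"
  shows "bij_betw (\<lambda>a. g (THE i. i < n \<and> a \<in> X i) a) A B"
proof -
  define idx where "idx a = (THE i. i < n \<and> a \<in> X i)" for a
  have idx: "idx a < n" "a \<in> X (idx a)" if "a \<in> A" for a
    using theI'[OF A[rule_format, OF that]] unfolding idx_def by blast+
  have idx_eq: "idx a = i" if "i < n" "a \<in> X i" for a i
    using the1_equality[OF A[rule_format] conjI[OF that]] XA that unfolding idx_def by blast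
  have in_Y: "g (idx a) a \<in> Y (idx a)" if "a \<in> A" for a
    using g idx[OF that] by (meson bij_betwE)
  show ?thesis
    unfolding idx_def[symmetric] bij_betw_def
  proof
    show "inj_on (\<lambda>a. g (idx a) a) A"
    proof (rule inj_onI)
      fix a b assume ab: "a \<in> A" "b \<in> A" "g (idx a) a = g (idx b) b"
      have "g (idx a) a \<in> B" using in_Y[OF ab(1)] idx[OF ab(1)] YB by blast
      then have "idx a = idx b"
        using B in_Y[OF ab(1)] in_Y[OF ab(2)] ab(3) idx[OF ab(1)] idx[OF ab(2)] by metis
      then show "a = b" using g idx ab by (metis bij_betw_def inj_onD)
    qed
    show "(\<lambda>a. g (idx a) a) ` A = B"
    proof
      show "(\<lambda>a. g (idx a) a) ` A \<subseteq> B" using in_Y idx YB by blast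
      show "B \<subseteq> (\<lambda>a. g (idx a) a) ` A"
      proof
        fix b assume "b \<in> B"
        then obtain i where i: "i < n" "b \<in> Y i" using B by blast
        then obtain a where "a \<in> X i" "b = g i a" using g by (metis bij_betw_def imageE)
        then show "b \<in> (\<lambda>a. g (idx a) a) ` A" using idx_eq i XA by blast
      qed
    qed
  qed
qed

definition level_iso ::
    "'a set \<Rightarrow> ('a \<Rightarrow> 'a \<Rightarrow> bool) \<Rightarrow> 'b set \<Rightarrow> ('b \<Rightarrow> 'b \<Rightarrow> bool) \<Rightarrow> 'a set \<Rightarrow> 'b set \<Rightarrow> ('a \<Rightarrow> 'b) \<Rightarrow> bool"
  where "level_iso P ltP Q ltQ X Y g \<longleftrightarrow> bij_betw g X Y \<and>
    (\<forall>x\<in>X. \<forall>y\<in>X. ltP x y \<longleftrightarrow> ltQ (g x) (g y)) \<and> (\<forall>x\<in>X. level Q ltQ (g x) = level P ltP x)"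

lemma matching_parts_level_iso:
  assumes P: "free31_poset P ltP" and Q: "free31_poset Q ltQ"
    and X: "X \<in> parts P ltP" and Y: "Y \<in> parts Q ltQ"
    and letter: "letter_of P ltP X = letter_of Q ltQ Y"
    and clone: "is_clone_set P ltP X \<Longrightarrow> card X = card Y"
    and tangle: "is_tangle P ltP X \<Longrightarrow> order_iso X ltP Y ltQ"
  shows "\<exists>g. level_iso P ltP Q ltQ X Y g"
proof -
  interpret p: free31_poset P ltP by (rule P)
  interpret q: free31_poset Q ltQ by (rule Q)
  show ?thesis
  proof (cases "is_tangle P ltP X")
    case True
    then have tY: "is_tangle Q ltQ Y" and Min: "Min (level P ltP ` X) = Min (level Q ltQ ` Y)"
      using letter unfolding letter_of_def by (auto split: if_splits)
    obtain g where g: "bij_betw g X Y" and mono: "\<forall>x\<in>X. \<forall>y\<in>X. ltP x y \<longleftrightarrow> ltQ (g x) (g y)"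
      using tangle[OF True] unfolding order_iso_def by blast
    have "level Q ltQ (g x) = level P ltP x" if x: "x \<in> X" for x
    proof -
      have "(\<exists>y\<in>Y. ltQ y (g x)) \<longleftrightarrow> (\<exists>y\<in>X. ltP y x)"
        using g mono x by (auto simp: bij_betw_def)
      then show ?thesis
        using p.tangle_part_level[OF True x] q.tangle_part_level[OF tY bij_betwE[OF g, rule_format, OF x]] Min by simp
    qed
    then show ?thesis using g mono unfolding level_iso_def by blast
  next
    case False
    then have cX: "is_clone_set P ltP X" using X by (simp add: parts_def)
    then have "\<not> is_tangle Q ltQ Y" and Min: "Min (level P ltP ` X) = Min (level Q ltQ ` Y)"
      using letter False unfolding letter_of_def by (auto split: if_splits)
    then have cY: "is_clone_set Q ltQ Y" using Y by (simp add: parts_def)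
    have "finite X" "finite Y"
      using finite_subset p.clone_set_subset[OF cX] q.clone_set_subset[OF cY] p.finite_carrier q.finite_carrier
      by blast+
    then obtain g where g: "bij_betw g X Y" using finite_same_card_bij clone[OF cX] by blast
    then have "\<forall>x\<in>X. \<forall>y\<in>X. ltP x y \<longleftrightarrow> ltQ (g x) (g y)"
      using p.clone_set_antichain[OF cX] q.clone_set_antichain[OF cY] by (meson bij_betwE)
    moreover have "\<forall>x\<in>X. level Q ltQ (g x) = level P ltP x"
      using p.clone_set_level[OF cX] q.clone_set_level[OF cY] Min g by (simp add: bij_betwE)
    ultimately show ?thesis using g unfolding level_iso_def by blast
  qed
qed

lemma order_iso_of_compatible_listings:
  assumes P: "free31_poset P ltP" and Q: "free31_poset Q ltQ"
    and clP: "compatible_listing P ltP Xs" and clQ: "compatible_listing Q ltQ Ys"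
    and len: "length Xs = length Ys"
    and parts: "\<And>i. i < length Xs \<Longrightarrow> \<exists>g. level_iso P ltP Q ltQ (Xs!i) (Ys!i) g"
  shows "order_iso P ltP Q ltQ"
proof -
  interpret p: free31_poset P ltP by (rule P)
  interpret q: free31_poset Q ltQ by (rule Q)
  let ?n = "length Xs"
  obtain g where g: "\<forall>i\<in>{..<?n}. bij_betw (g i) (Xs!i) (Ys!i) \<and>
      (\<forall>x\<in>Xs!i. \<forall>y\<in>Xs!i. ltP x y \<longleftrightarrow> ltQ (g i x) (g i y)) \<and>
      (\<forall>x\<in>Xs!i. level Q ltQ (g i x) = level P ltP x)"
    using bchoice[of "{..<?n}"] parts unfolding level_iso_def by (metis lessThan_iff)
  define idx where "idx a = (THE i. i < ?n \<and> a \<in> Xs!i)" for a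
  have idx: "idx a < ?n" "a \<in> Xs!(idx a)" if "a \<in> P" for a
    using theI'[OF p.compatible_listing_unique_index[OF clP that]] unfolding idx_def by blast+
  define f where "f a = g (idx a) a" for a
  have f_in: "f a \<in> Ys!(idx a)" if "a \<in> P" for a
    using g idx[OF that] unfolding f_def by (meson bij_betwE lessThan_iff)
  have f_level: "level Q ltQ (f a) = level P ltP a" if "a \<in> P" for a
    using g idx[OF that] unfolding f_def by simp
  have "\<forall>i<?n. Xs!i \<subseteq> P" "\<forall>i<?n. Ys!i \<subseteq> Q"
    using p.compatible_listing_nth_part[OF clP] q.compatible_listing_nth_part[OF clQ] len
      p.parts_subset q.parts_subset by auto
  then have "bij_betw f P Q"
    unfolding f_def idx_def
    using p.compatible_listing_unique_index[OF clP] q.compatible_listing_unique_index[OF clQ] len g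
    by (intro bij_betw_glue) auto
  moreover have "ltP a b \<longleftrightarrow> ltQ (f a) (f b)" if ab: "a \<in> P" "b \<in> P" for a b
  proof (cases "idx a = idx b")
    case True
    then show ?thesis using g idx[OF ab(1)] idx[OF ab(2)] unfolding f_def by simp
  next
    \<comment> \<open>between different parts, both orders are read off the listing position and the levels\<close>
    case False
    have "i < ?n" "j < ?n" "a \<in> Xs!i" "b \<in> Xs!j" if "i = idx a" "j = idx b" for i j
      using idx ab that by auto
    then show ?thesis
      using p.compatible_listing_less_iff[OF clP _ _ False] q.compatible_listing_less_iff[OF clQ _ _ False]
        f_in ab len f_level by simp
  qed
  ultimately show ?thesis unfolding order_iso_def by blast
qed

theorem corollary3p10:
  fixes P :: "'a set" and ltP :: "'a \<Rightarrow> 'a \<Rightarrow> bool"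
    and Q :: "'b set" and ltQ :: "'b \<Rightarrow> 'b \<Rightarrow> bool"
    and Xs :: "'a set list" and Ys :: "'b set list"
  assumes "finite P" "strict_poset P ltP" "free_3_1 P ltP"
    and "finite Q" "strict_poset Q ltQ" "free_3_1 Q ltQ"
    and "skeleton P ltP = skeleton Q ltQ"
    and "compatible_listing P ltP Xs" "compatible_listing Q ltQ Ys"
    and "length Xs = length Ys"
    and "word P ltP Xs = word Q ltQ Ys"
    and "\<forall>i<length Xs. (is_clone_set P ltP (Xs!i) \<longrightarrow> card (Xs!i) = card (Ys!i)) \<and>
           (is_tangle P ltP (Xs!i) \<longrightarrow> order_iso (Xs!i) ltP (Ys!i) ltQ)"
  shows "order_iso P ltP Q ltQ"
proof -
  have P: "free31_poset P ltP" and Q: "free31_poset Q ltQ"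
    using assms(1-6) by (simp_all add: free31_poset_def)
  show ?thesis
  proof (rule order_iso_of_compatible_listings[OF P Q assms(8-10)])
    fix i assume i: "i < length Xs"
    have "letter_of P ltP (Xs!i) = letter_of Q ltQ (Ys!i)"
      using arg_cong[OF assms(11), of "\<lambda>w. w!i"] i assms(10) by (simp add: word_def)
    then show "\<exists>g. level_iso P ltP Q ltQ (Xs!i) (Ys!i) g"
      using matching_parts_level_iso[OF P Q] free31_poset.compatible_listing_nth_part[OF P assms(8) i]
        free31_poset.compatible_listing_nth_part[OF Q assms(9)] i assms(10,12) by simp
  qed
qed

end
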